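(* Let $(Z_i)_{i\in\mathbb N}$ be independent with $Z_i\sim N(\mu r_i,1)$, where $\mu>0$ and $r_i\in\{0,1\}$ are fixed, let $c$ be a fixed threshold, and let $M_k=\{i\le k:\ |Z_i|>c\}$. Then for every $\beta\in(0,1)$, $$\mathbb P\Big(\forall k\in\mathbb N:\ \sum_{i\in M_k}r_i-\mathbb E\Big(\sum_{i\in M_k}r_i\Big)\ge-\frac{C_k^\beta}{2}\big(N_1(k)\big)^{1/2}\Big)\ge1-\beta,$$ where $\mathbb E(\sum_{i\in M_k}r_i)=\mathbb P(|Z(\mu)|>c)\,N_1(k)$.
   Context: $Z(\nu)$ denotes a $N(\nu,1)$ random variable. For $\gamma\in(0,1)$, $k\ge1$: $C_k^\gamma=1.7\sqrt{\log\log(2k)+0.72\log\frac{5.2}{\gamma}}$. $N_1(k)=\sum_{i=1}^kr_i$. *)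

theory Defs
  imports "HOL-Probability.Probability"
begin

definition C_const :: "nat \<Rightarrow> real \<Rightarrow> real" where
  "C_const k \<gamma> = 1.7 * sqrt (ln (ln (2 * real k)) + 0.72 * ln (5.2 / \<gamma>))"

definition N1 :: "(nat \<Rightarrow> real) \<Rightarrow> nat \<Rightarrow> real" where
  "N1 r k = (\<Sum>i=1..k. r i)"

definition normal_measure :: "real \<Rightarrow> real measure" where
  "normal_measure \<nu> = density lborel (normal_density \<nu> 1)"

definition tail_prob :: "real \<Rightarrow> real \<Rightarrow> real" where
  "tail_prob \<nu> c = measure (normal_measure \<nu>) {x. \<bar>x\<bar> > c}"

end

theory Submission
  imports Defs
begin

(* Only the indicators of the events |Z_i| > c matter.  They are independent and, whenever
   r_i = 1, Bernoulli with parameter p = P(|Z(mu)| > c); so up to a horizon K the probability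
   of a failure is a sum of product weights over Boolean strings of length K.
   For fixed lambda >= 0 the running product of exp (lambda r_i (p - 1_i) - lambda^2 r_i / 8)
   is a nonnegative supermartingale by Hoeffding's lemma, and Ville's maximal inequality
   bounds the probability that it ever reaches 1/a by a.  Peeling: if the bound fails at
   time k and N_1(k) lies in the dyadic block [2^j, 2^(j+1)], the product for the lambda
   tuned to that block reaches 1/a_j with a_j = 0.318 beta (j+1)^(-1.4); the constants in
   C_k^beta are exactly what makes this work.  Since 0.318 zeta(1.4) < 1, a union bound over
   the blocks gives failure probability at most beta up to every horizon, and continuity
   from below finishes the proof. *)

section \<open>Numerical bounds\<close>

lemma powr_neg_le_of_power_ge_1:
  fixes x q :: real
  assumes "0 < x" "0 < q" "0 < d" "1 \<le> q ^ d * x ^ k"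
  shows "x powr (- (real k / real d)) \<le> q"
proof -
  define y where "y = x powr (real k / real d)"
  have y: "0 < y" using assms(1) by (simp add: y_def)
  have "y ^ d = x ^ k"
    using assms(1,3) by (simp add: y_def powr_realpow[symmetric] powr_powr)
  then have "1 \<le> (q * y) ^ d" using assms(4) by (simp add: power_mult_distrib)
  then have "1 \<le> q * y"
    using power_less_one_iff[of "q * y" d] assms(2,3) y by force
  moreover have "x powr (- (real k / real d)) = 1 / y"
    using assms(1) by (simp add: y_def powr_minus_divide)
  moreover have "1 / y \<le> q" using \<open>1 \<le> q * y\<close> y by (simp add: divide_le_eq mult.commute)
  ultimately show ?thesis by simp
qed

lemma powr_neg_Suc_le_diff:
  fixes s x :: real
  assumes "0 < s" "1 < x"
  shows "s * x powr - (s + 1) \<le> (x - 1) powr - s - x powr - s"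
proof -
  have "((\<lambda>z. z powr - s) has_real_derivative - s * z powr - (s + 1)) (at z)"
    if "x - 1 \<le> z" "z \<le> x" for z
  proof -
    have "0 < z" using that assms(2) by linarith
    moreover have "- s - 1 = - (s + 1)" by simp
    ultimately show ?thesis using has_real_derivative_powr[of z "- s"] by metis
  qed
  from MVT2[of "x - 1" x, OF _ this] obtain z where z: "x - 1 < z" "z < x"
    and mvt: "x powr - s - (x - 1) powr - s = (x - (x - 1)) * (- s * z powr - (s + 1))"
    by auto
  have "s * x powr - (s + 1) \<le> s * z powr - (s + 1)"
    using z assms by (intro mult_left_mono powr_mono2') auto
  also have "\<dots> = (x - 1) powr - s - x powr - s" using mvt by simp
  finally show ?thesis .
qed

lemma sum_powr_neg_tail_le:
  fixes s :: real
  assumes "0 < s" "1 \<le> m" "m \<le> n"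
  shows "s * (\<Sum>j\<in>{m..<n}. (real j + 1) powr - (s + 1)) \<le> real m powr - s - real n powr - s"
  using assms(3)
proof (induction n rule: dec_induct)
  case base
  then show ?case by simp
next
  case (step n)
  have "s * (real n + 1) powr - (s + 1) \<le> real n powr - s - real (Suc n) powr - s"
    using powr_neg_Suc_le_diff[of s "real n + 1"] assms step.hyps by (simp add: add.commute)
  moreover have "(\<Sum>j\<in>{m..<Suc n}. (real j + 1) powr - (s + 1))
      = (\<Sum>j\<in>{m..<n}. (real j + 1) powr - (s + 1)) + (real n + 1) powr - (s + 1)"
    using step.hyps by simp
  ultimately show ?case using step.IH by (simp add: distrib_left)
qed

lemma sum_powr_neg_7_5_le: "(\<Sum>j<n. (real j + 1) powr (- 1.4)) \<le> 3.14"
proof -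
  have bound: "real m powr (- (real k / 5)) \<le> q"
    if "0 < m" "0 < q" "1 \<le> q ^ 5 * real m ^ k" for m k q
    using powr_neg_le_of_power_ge_1[of "real m" q 5 k] that by simp
  have head: "(\<Sum>j<8. (real j + 1) powr (- 1.4))
      \<le> 1 + 0.37893 + 0.2148 + 0.14359 + 0.10507 + 0.0814 + 0.0656 + 0.05441"
    using bound[of 2 "0.37893" 7] bound[of 3 "0.2148" 7] bound[of 4 "0.14359" 7]
      bound[of 5 "0.10507" 7] bound[of 6 "0.0814" 7] bound[of 7 "0.0656" 7] bound[of 8 "0.05441" 7]
    by (simp add: lessThan_nat_numeral power_divide)
  have "0.4 * (\<Sum>j\<in>{8..<max n 8}. (real j + 1) powr (- 1.4))
      \<le> 8 powr (- 0.4) - real (max n 8) powr (- 0.4)"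
    using sum_powr_neg_tail_le[of "0.4" 8 "max n 8"] by simp
  moreover have "0 \<le> real (max n 8) powr (- 0.4)" by simp
  moreover have "(8::real) powr (- 0.4) \<le> 4353 / 10000"
    using bound[of 8 "4353 / 10000" 2] by (simp add: power_divide)
  ultimately have tail: "(\<Sum>j\<in>{8..<max n 8}. (real j + 1) powr (- 1.4)) \<le> 5 / 2 * (4353 / 10000)"
    by linarith
  have "(\<Sum>j<n. (real j + 1) powr (- 1.4)) \<le> (\<Sum>j<max n 8. (real j + 1) powr (- 1.4))"
    by (intro sum_mono2) auto
  also have "\<dots> = (\<Sum>j<8. (real j + 1) powr (- 1.4)) + (\<Sum>j\<in>{8..<max n 8}. (real j + 1) powr (- 1.4))"
    by (simp add: lessThan_atLeast0 sum.atLeastLessThan_concat)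
  finally show ?thesis using head tail by simp
qed

lemma sum_exp_taylor_le_exp:
  fixes x :: real
  assumes "0 \<le> x \<or> even n"
  shows "(\<Sum>m<n. x ^ m / fact m) \<le> exp x"
proof -
  obtain t where "exp x = (\<Sum>m<n. x ^ m / fact m) + exp t / fact n * x ^ n"
    using Maclaurin_exp_le[of x n] by blast
  moreover have "0 \<le> exp t / fact n * x ^ n"
    using assms by (auto simp: zero_le_even_power)
  ultimately show ?thesis by linarith
qed

lemma ln_2_ge: "6931 / 10000 \<le> ln (2::real)"
proof -
  have "(1 / 2::real) \<le> (\<Sum>m<10. (- (6931 / 10000)) ^ m / fact m)"
    by (simp add: lessThan_nat_numeral fact_numeral power_divide)
  also have "\<dots> \<le> exp (- (6931 / 10000))" by (rule sum_exp_taylor_le_exp) simp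
  finally have "exp (6931 / 10000 :: real) \<le> 2" by (simp add: exp_minus field_simps)
  then show ?thesis by (subst ln_ge_iff) simp_all
qed

lemma ln_ln_2_ge: "- 3667 / 10000 \<le> ln (ln (2::real))"
proof -
  have "10000 / 6931 \<le> (\<Sum>m<6. (3667 / 10000::real) ^ m / fact m)"
    by (simp add: lessThan_nat_numeral fact_numeral power_divide)
  also have "\<dots> \<le> exp (3667 / 10000)" by (rule sum_exp_taylor_le_exp) simp
  finally have "exp (- 3667 / 10000 :: real) \<le> 6931 / 10000" by (simp add: exp_minus field_simps)
  also have "\<dots> \<le> ln 2" by (rule ln_2_ge)
  finally show ?thesis by (subst ln_ge_iff) simp_all
qed

lemma ln_5_2_ge: "16486 / 10000 \<le> ln (5.2::real)"
proof -
  have "1 / 5.2 \<le> (\<Sum>m<12. (- (16486 / 10000::real)) ^ m / fact m)"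
    by (simp add: lessThan_nat_numeral fact_numeral power_divide)
  also have "\<dots> \<le> exp (- (16486 / 10000))" by (rule sum_exp_taylor_le_exp) simp
  finally have "exp (16486 / 10000 :: real) \<le> 5.2" by (simp add: exp_minus field_simps)
  then show ?thesis by (subst ln_ge_iff) simp_all
qed

lemma ln_0_318_ge: "- 11458 / 10000 \<le> ln (0.318::real)"
proof -
  have "1 / 0.318 \<le> (\<Sum>m<10. (11458 / 10000::real) ^ m / fact m)"
    by (simp add: lessThan_nat_numeral fact_numeral power_divide)
  also have "\<dots> \<le> exp (11458 / 10000)" by (rule sum_exp_taylor_le_exp) simp
  finally have "exp (- 11458 / 10000 :: real) \<le> 0.318" by (simp add: exp_minus field_simps)
  then show ?thesis by (subst ln_ge_iff) simp_all
qed

section \<open>Failure budgets and the constant C_k\<close>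

(* 0.318 * zeta 1.4 < 1, so the budgets of all dyadic levels add up to at most beta. *)
definition level_budget :: "real \<Rightarrow> nat \<Rightarrow> real" where
  "level_budget \<beta> j = \<beta> * 0.318 / (real j + 1) powr 1.4"

lemma level_budget_pos: "0 < \<beta> \<Longrightarrow> 0 < level_budget \<beta> j"
  by (simp add: level_budget_def)

lemma ln_level_budget_neg:
  assumes "0 < \<beta>" "\<beta> < 1"
  shows "ln (level_budget \<beta> j) < 0"
proof -
  have "1 \<le> (real j + 1) powr 1.4" by (rule ge_one_powr_ge_zero) auto
  then have "level_budget \<beta> j \<le> \<beta> * 0.318"
    using assms(1) unfolding level_budget_def by (simp add: divide_le_eq mult_le_cancel_left1)
  then have "level_budget \<beta> j < 1" using assms by simp
  then show ?thesis using level_budget_pos[OF assms(1)] by simp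
qed

lemma sum_level_budget_le:
  assumes "0 \<le> \<beta>"
  shows "(\<Sum>j<n. level_budget \<beta> j) \<le> \<beta>"
proof -
  have "(\<Sum>j<n. level_budget \<beta> j) = \<beta> * 0.318 * (\<Sum>j<n. (real j + 1) powr (- 1.4))"
    by (simp add: level_budget_def sum_distrib_left powr_minus_divide)
  also have "\<dots> \<le> \<beta> * 0.318 * 3.14"
    using sum_powr_neg_7_5_le assms by (intro mult_left_mono) auto
  also have "\<dots> \<le> \<beta>" using assms by simp
  finally show ?thesis .
qed

lemma ln_ln_double_ge:
  assumes "2 ^ j \<le> k"
  shows "ln (real j + 1) + ln (ln 2) \<le> ln (ln (2 * real k))"
proof -
  have "(2::real) ^ (j + 1) \<le> 2 * real k"
    using assms by (simp flip: of_nat_le_iff)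
  have "(real j + 1) * ln 2 = ln ((2::real) ^ (j + 1))"
    by (subst ln_realpow) simp_all
  also have "\<dots> \<le> ln (2 * real k)"
    using \<open>2 ^ (j + 1) \<le> 2 * real k\<close> by (intro ln_mono) auto
  finally have "(real j + 1) * ln 2 \<le> ln (2 * real k)" .
  then have "ln ((real j + 1) * ln 2) \<le> ln (ln (2 * real k))"
    by (intro ln_mono) auto
  then show ?thesis by (simp add: ln_mult)
qed

lemma lil_constant_arith:
  fixes t A l :: real
  assumes "1.41421 \<le> t" "0 \<le> A" "0 \<le> l"
  shows "(2 * t + 3) * (A + 1.1458 + 1.4 * l)
           \<le> 2 * t * (2.89 * (l - 0.3667 + 0.72 * 1.6486 + 0.72 * A))"
proof -
  have "1.41421 * A \<le> t * A" "1.41421 * l \<le> t * l"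
    using assms by (intro mult_right_mono; simp)+
  then show ?thesis using assms by (simp add: field_simps)
qed

lemma lil_constant_bound:
  assumes "2 ^ j \<le> k" "0 < \<beta>" "\<beta> < 1"
  shows "0 \<le> C_const k \<beta>"
    and "(2 * sqrt 2 + 3) * - ln (level_budget \<beta> j) \<le> 2 * sqrt 2 * (C_const k \<beta>)\<^sup>2"
proof -
  define A where "A = - ln \<beta>"
  define l where "l = ln (real j + 1)"
  define S where "S = ln (ln (2 * real k)) + 0.72 * ln (5.2 / \<beta>)"
  have A: "0 \<le> A" and l: "0 \<le> l" using assms(2,3) by (simp_all add: A_def l_def)
  have "- ln (level_budget \<beta> j) = A - ln 0.318 + 1.4 * l"
    using assms(2) by (simp add: level_budget_def A_def l_def ln_div ln_mult ln_powr)
  also have "\<dots> \<le> A + 1.1458 + 1.4 * l" using ln_0_318_ge by simp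
  finally have L: "- ln (level_budget \<beta> j) \<le> A + 1.1458 + 1.4 * l" .
  have "S = ln (ln (2 * real k)) + 0.72 * ln 5.2 + 0.72 * A"
    using assms(2) ln_div[of "5.2" \<beta>] by (simp add: S_def A_def algebra_simps)
  then have S: "l - 0.3667 + 0.72 * 1.6486 + 0.72 * A \<le> S"
    using ln_ln_double_ge[OF assms(1)] ln_ln_2_ge ln_5_2_ge unfolding l_def by simp
  then have "0 \<le> S" using A l by simp
  have C_eq: "C_const k \<beta> = 1.7 * sqrt S" unfolding C_const_def S_def ..
  show "0 \<le> C_const k \<beta>" unfolding C_eq using \<open>0 \<le> S\<close> by simp
  have C: "(C_const k \<beta>)\<^sup>2 = 2.89 * S"
    unfolding C_eq using \<open>0 \<le> S\<close> by (simp add: power_mult_distrib power_divide)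
  have t: "1.41421 \<le> sqrt (2::real)" by (rule real_le_rsqrt) (simp add: power2_eq_square)
  have "(2 * sqrt 2 + 3) * - ln (level_budget \<beta> j) \<le> (2 * sqrt 2 + 3) * (A + 1.1458 + 1.4 * l)"
    using L by (intro mult_left_mono) auto
  also have "\<dots> \<le> 2 * sqrt 2 * (2.89 * (l - 0.3667 + 0.72 * 1.6486 + 0.72 * A))"
    using t A l by (rule lil_constant_arith)
  also have "\<dots> \<le> 2 * sqrt 2 * (C_const k \<beta>)\<^sup>2"
    unfolding C using S by (intro mult_left_mono) auto
  finally show "(2 * sqrt 2 + 3) * - ln (level_budget \<beta> j) \<le> 2 * sqrt 2 * (C_const k \<beta>)\<^sup>2" .
qed

lemma sqrt2_sum_square_le:
  fixes u n :: real
  assumes "u \<le> n" "n \<le> 2 * u"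
  shows "(u * sqrt 2 + n)\<^sup>2 \<le> (2 * sqrt 2 + 3) * u * n"
proof -
  have "(u * sqrt 2 + n)\<^sup>2 = 2 * u\<^sup>2 + 2 * sqrt 2 * u * n + n\<^sup>2"
    by (simp add: power2_eq_square algebra_simps)
  moreover have "(n - u) * (n - 2 * u) \<le> 0"
    using assms by (intro mult_nonneg_nonpos) auto
  ultimately show ?thesis by (simp add: power2_eq_square algebra_simps)
qed

lemma tradeoff_at_lambda_le:
  fixes L u n C :: real
  assumes "0 < L" "0 < u" "u \<le> n" "n \<le> 2 * u" "0 \<le> C"
    and key: "(2 * sqrt 2 + 3) * L \<le> 2 * sqrt 2 * C\<^sup>2"
  defines "lam \<equiv> sqrt (8 * L / (u * sqrt 2))"
  shows "L / lam + lam * n / 8 \<le> C / 2 * sqrt n"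
proof -
  have "0 < lam" using assms(1,2) by (simp add: lam_def)
  have L: "L = lam\<^sup>2 * u * sqrt 2 / 8" using assms(1,2) by (simp add: lam_def)
  have "L / lam + lam * n / 8 = lam * (u * sqrt 2 + n) / 8"
    using \<open>0 < lam\<close> unfolding L by (simp add: field_simps power2_eq_square)
  moreover have "(lam * (u * sqrt 2 + n) / 8)\<^sup>2 \<le> (C / 2 * sqrt n)\<^sup>2"
  proof -
    have "(lam * (u * sqrt 2 + n) / 8)\<^sup>2 = L * (u * sqrt 2 + n)\<^sup>2 / (8 * u * sqrt 2)"
      using assms(2) unfolding L by (simp add: power_mult_distrib power_divide)
    also have "\<dots> \<le> L * ((2 * sqrt 2 + 3) * u * n) / (8 * u * sqrt 2)"
      using sqrt2_sum_square_le[OF assms(3,4)] assms(1,2)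
      by (intro divide_right_mono mult_left_mono) auto
    also have "\<dots> = (2 * sqrt 2 + 3) * L * n / (8 * sqrt 2)"
      using assms(2) by (simp add: field_simps)
    also have "\<dots> \<le> 2 * sqrt 2 * C\<^sup>2 * n / (8 * sqrt 2)"
      using key assms(2,3) by (intro divide_right_mono mult_right_mono) auto
    also have "\<dots> = (C / 2 * sqrt n)\<^sup>2"
      using assms(2,3) by (simp add: power_mult_distrib power_divide)
    finally show ?thesis .
  qed
  moreover have "0 \<le> C / 2 * sqrt n" using assms(2,3,5) by simp
  ultimately show ?thesis by (metis power2_le_imp_le)
qed

section \<open>Ville's inequality on Boolean strings\<close>

fun prod_weight :: "(nat \<Rightarrow> bool \<Rightarrow> real) \<Rightarrow> nat \<Rightarrow> bool list \<Rightarrow> real" where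
  "prod_weight w a [] = 1"
| "prod_weight w a (v # vs) = w a v * prod_weight w (Suc a) vs"

fun reaches :: "(nat \<Rightarrow> bool \<Rightarrow> real) \<Rightarrow> nat \<Rightarrow> real \<Rightarrow> real \<Rightarrow> bool list \<Rightarrow> bool" where
  "reaches f a m b [] \<longleftrightarrow> b \<le> m"
| "reaches f a m b (v # vs) \<longleftrightarrow> b \<le> m \<or> reaches f (Suc a) (m * f a v) b vs"

lemma prod_weight_eq_prod: "prod_weight w a ys = (\<Prod>i<length ys. w (a + i) (ys ! i))"
  by (induction ys arbitrary: a) (simp_all add: prod.lessThan_Suc_shift del: prod.lessThan_Suc)

lemma prod_weight_nonneg: "(\<And>i v. a \<le> i \<Longrightarrow> 0 \<le> w i v) \<Longrightarrow> 0 \<le> prod_weight w a ys"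
  by (induction ys arbitrary: a) simp_all

lemma reachesI:
  assumes "k \<le> length ys" "b \<le> m * (\<Prod>i<k. f (a + i) (ys ! i))"
  shows "reaches f a m b ys"
  using assms
proof (induction ys arbitrary: a m k)
  case Nil
  then show ?case by simp
next
  case (Cons v vs)
  show ?case
  proof (cases k)
    case 0
    then show ?thesis using Cons.prems by simp
  next
    case (Suc k')
    have "m * (\<Prod>i<k. f (a + i) ((v # vs) ! i)) = m * f a v * (\<Prod>i<k'. f (Suc a + i) (vs ! i))"
      by (simp add: Suc prod.lessThan_Suc_shift del: prod.lessThan_Suc)
    then have "reaches f (Suc a) (m * f a v) b vs"
      using Cons.prems Suc by (intro Cons.IH[of k']) auto
    then show ?thesis by simp
  qed
qed

lemma sum_bool_lists_Suc:
  "(\<Sum>ys | length ys = Suc n \<and> P ys. g ys)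
     = (\<Sum>ys | length ys = n \<and> P (True # ys). g (True # ys))
       + (\<Sum>ys | length ys = n \<and> P (False # ys). g (False # ys))"
proof -
  define T where "T v = {ys :: bool list. length ys = n \<and> P (v # ys)}" for v
  have fin: "finite (T v)" for v
    by (rule finite_subset[OF _ finite_lists_length_eq[of "UNIV :: bool set" n]]) (auto simp: T_def)
  have split: "{ys. length ys = Suc n \<and> P ys} = (#) True ` T True \<union> (#) False ` T False"
  proof (intro set_eqI iffI)
    fix ys assume "ys \<in> {ys. length ys = Suc n \<and> P ys}"
    then obtain v vs where "ys = v # vs" "length vs = n" "P (v # vs)"
      by (auto simp: length_Suc_conv)
    then show "ys \<in> (#) True ` T True \<union> (#) False ` T False"
      by (cases v) (auto simp: T_def)
  qed (auto simp: T_def)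
  have "(\<Sum>ys | length ys = Suc n \<and> P ys. g ys)
      = (\<Sum>ys\<in>(#) True ` T True. g ys) + (\<Sum>ys\<in>(#) False ` T False. g ys)"
    unfolding split using fin by (subst sum.union_disjoint) auto
  also have "\<dots> = (\<Sum>ys\<in>T True. g (True # ys)) + (\<Sum>ys\<in>T False. g (False # ys))"
    by (simp add: sum.reindex)
  finally show ?thesis by (simp add: T_def)
qed

lemma sum_prod_weight:
  assumes "\<And>i. a \<le> i \<Longrightarrow> w i True + w i False = 1"
  shows "(\<Sum>ys | length ys = n. prod_weight w a ys) = 1"
  using assms
proof (induction n arbitrary: a)
  case 0
  then show ?case by simp
next
  case (Suc n)
  have "(\<Sum>ys | length ys = n. prod_weight w (Suc a) ys) = 1"
    using Suc.prems by (intro Suc.IH) auto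
  then show ?case
    using sum_bool_lists_Suc[where P = "\<lambda>_. True" and g = "prod_weight w a"] Suc.prems[of a]
    by (simp add: sum_distrib_left[symmetric] distrib_right[symmetric])
qed

lemma ville_inequality:
  assumes w: "\<And>i v. a \<le> i \<Longrightarrow> 0 \<le> w i v" "\<And>i. a \<le> i \<Longrightarrow> w i True + w i False = 1"
    and f: "\<And>i v. a \<le> i \<Longrightarrow> 0 \<le> f i v"
    and mean: "\<And>i. a \<le> i \<Longrightarrow> w i True * f i True + w i False * f i False \<le> 1"
    and "0 < b" "0 \<le> m"
  shows "(\<Sum>ys | length ys = n \<and> reaches f a m b ys. prod_weight w a ys) \<le> m / b"
  using w f mean \<open>0 \<le> m\<close>
proof (induction n arbitrary: a m)
  case 0
  have "{ys. length ys = 0 \<and> reaches f a m b ys} = (if b \<le> m then {[]} else {})" by auto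
  then show ?case using 0 \<open>0 < b\<close> by (simp add: le_divide_eq)
next
  case (Suc n)
  show ?case
  proof (cases "b \<le> m")
    case True
    have "(\<Sum>ys | length ys = Suc n \<and> reaches f a m b ys. prod_weight w a ys)
        = (\<Sum>ys | length ys = Suc n. prod_weight w a ys)"
      using True by (intro sum.cong) (auto simp: length_Suc_conv)
    also have "\<dots> = 1" using Suc.prems by (intro sum_prod_weight) auto
    finally show ?thesis using True \<open>0 < b\<close> by simp
  next
    case False
    define R where "R v = (\<Sum>ys | length ys = n \<and> reaches f (Suc a) (m * f a v) b ys.
                             prod_weight w (Suc a) ys)" for v
    have R: "R v \<le> m * f a v / b" for v
      unfolding R_def using Suc.prems by (intro Suc.IH) auto
    have "(\<Sum>ys | length ys = Suc n \<and> reaches f a m b ys. prod_weight w a ys)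
        = w a True * R True + w a False * R False"
      using False by (simp add: sum_bool_lists_Suc R_def sum_distrib_left)
    also have "\<dots> \<le> w a True * (m * f a True / b) + w a False * (m * f a False / b)"
      using Suc.prems R by (intro add_mono mult_left_mono) auto
    also have "\<dots> = m * (w a True * f a True + w a False * f a False) / b"
      by (simp add: algebra_simps add_divide_distrib)
    also have "\<dots> \<le> m / b"
      using Suc.prems \<open>0 < b\<close> by (intro divide_right_mono mult_left_le) auto
    finally show ?thesis .
  qed
qed

lemma bernoulli_tilt_le_1:
  fixes p l :: real
  assumes "0 \<le> p" "p \<le> 1" "0 \<le> l"
  shows "p * exp (l * (p - 1) - l\<^sup>2 / 8) + (1 - p) * exp (l * p - l\<^sup>2 / 8) \<le> 1"
proof -
  define X where "X = 1 + (1 - p) * (exp l - 1)"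
  have "0 < X" using assms by (simp add: X_def add_pos_nonneg)
  have "- l * (1 - p) + ln X \<le> l\<^sup>2 / 8"
    unfolding X_def using Hoeffdings_lemma_aux[of l "1 - p"] assms by simp
  then have "ln X \<le> l\<^sup>2 / 8 + l * (1 - p)" by (simp add: algebra_simps)
  then have X: "X \<le> exp (l\<^sup>2 / 8 + l * (1 - p))" using \<open>0 < X\<close> by (metis exp_le_cancel_iff exp_ln)
  have "p * exp (l * (p - 1) - l\<^sup>2 / 8) + (1 - p) * exp (l * p - l\<^sup>2 / 8)
      = exp (l * (p - 1) - l\<^sup>2 / 8) * X"
    by (simp add: X_def algebra_simps flip: exp_add)
  also have "\<dots> \<le> exp (l * (p - 1) - l\<^sup>2 / 8) * exp (l\<^sup>2 / 8 + l * (1 - p))"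
    using X by (intro mult_left_mono) auto
  also have "\<dots> = 1" by (simp add: algebra_simps flip: exp_add)
  finally show ?thesis .
qed

section \<open>Peeling over dyadic levels of N_1\<close>

definition tilt_factor :: "real \<Rightarrow> (nat \<Rightarrow> real) \<Rightarrow> real \<Rightarrow> nat \<Rightarrow> bool \<Rightarrow> real" where
  "tilt_factor l r p i v = exp (l * r i * (p - of_bool v) - l\<^sup>2 * r i / 8)"

(* Position i of the list carries the indicator of coordinate i + 1. *)
definition centered_sum :: "(nat \<Rightarrow> real) \<Rightarrow> real \<Rightarrow> bool list \<Rightarrow> nat \<Rightarrow> real" where
  "centered_sum r p ys k = (\<Sum>i<k. r (Suc i) * (of_bool (ys ! i) - p))"

(* The lambda minimising L / lambda + lambda N / 8 at N = sqrt 2 * 2^j, the geometric mean of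
   the ends of the dyadic block [2^j, 2^(j+1)]. *)
definition level_lambda :: "real \<Rightarrow> nat \<Rightarrow> real" where
  "level_lambda \<beta> j = sqrt (8 * - ln (level_budget \<beta> j) / (2 ^ j * sqrt 2))"

lemma level_lambda_pos: "0 < \<beta> \<Longrightarrow> \<beta> < 1 \<Longrightarrow> 0 < level_lambda \<beta> j"
  using ln_level_budget_neg[of \<beta> j] by (simp add: level_lambda_def divide_neg_pos)

lemma tilt_factor_mean_le_1:
  assumes "r i \<in> {0, 1}" "0 \<le> l"
    and "0 \<le> w True" "0 \<le> w False" "w True + w False = 1" "r i = 1 \<Longrightarrow> w True = p"
  shows "w True * tilt_factor l r p i True + w False * tilt_factor l r p i False \<le> 1"
proof (cases "r i = 1")
  case True
  then have "0 \<le> p" "p \<le> 1" "w False = 1 - p" using assms(3-6) by auto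
  then show ?thesis
    using bernoulli_tilt_le_1[of p l] True assms(2,6) by (simp add: tilt_factor_def)
next
  case False
  then show ?thesis using assms(1,5) by (simp add: tilt_factor_def)
qed

lemma N1_eq_sum_lessThan: "N1 r k = (\<Sum>i<k. r (Suc i))"
  by (simp add: N1_def sum.atLeast1_atMost_eq)

lemma N1_eq_card:
  assumes "\<And>i. r i \<in> {0, 1}"
  shows "N1 r k = real (card {i\<in>{1..k}. r i = 1})"
proof -
  have "N1 r k = (\<Sum>i\<in>{1..k}. if r i = 1 then 1 else 0)"
    unfolding N1_def using assms by (intro sum.cong) (auto simp: insert_iff)
  also have "\<dots> = (\<Sum>i\<in>{i\<in>{1..k}. r i = 1}. 1)"
    by (rule sum.inter_filter[symmetric]) simp
  finally show ?thesis by simp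
qed

lemma prod_tilt_factor:
  "(\<Prod>i<k. tilt_factor l r p (Suc i) (ys ! i))
     = exp (- l * centered_sum r p ys k - l\<^sup>2 * N1 r k / 8)"
proof -
  have "(\<Prod>i<k. tilt_factor l r p (Suc i) (ys ! i))
      = exp (\<Sum>i<k. - l * (r (Suc i) * (of_bool (ys ! i) - p)) - l\<^sup>2 / 8 * r (Suc i))"
    by (simp add: tilt_factor_def exp_sum algebra_simps)
  also have "\<dots> = exp (- l * centered_sum r p ys k - l\<^sup>2 * N1 r k / 8)"
    by (simp only: centered_sum_def N1_eq_sum_lessThan sum_subtractf sum_distrib_left[symmetric])
       (simp add: algebra_simps)
  finally show ?thesis .
qed

lemma centered_sum_eq_0_if_N1_eq_0:
  assumes "\<And>i. 0 \<le> r i" "N1 r k = 0"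
  shows "centered_sum r p ys k = 0"
proof -
  have "r (Suc i) = 0" if "i < k" for i
    using assms that by (simp add: N1_eq_sum_lessThan sum_nonneg_eq_0_iff)
  then show ?thesis by (simp add: centered_sum_def)
qed

lemma N1_dyadic_block:
  assumes "\<And>i. r i \<in> {0, 1}" "0 < N1 r k"
  obtains j where "2 ^ j \<le> k" "j < k" "2 ^ j \<le> N1 r k" "N1 r k \<le> 2 * 2 ^ j"
proof -
  define n where "n = card {i\<in>{1..k}. r i = 1}"
  have N: "N1 r k = real n" unfolding n_def using assms(1) by (rule N1_eq_card)
  have "n \<le> card {1..k}" unfolding n_def by (rule card_mono) auto
  then have "n \<le> k" by simp
  obtain j where j: "2 ^ j \<le> n" "n < 2 ^ (j + 1)"
    using ex_power_ivl1[of 2 n] assms(2) N by auto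
  then have "2 ^ j \<le> n" "n \<le> 2 * 2 ^ j" by simp_all
  then have "(2::real) ^ j \<le> real n" "real n \<le> 2 * 2 ^ j"
    by (metis of_nat_le_iff of_nat_mult of_nat_numeral of_nat_power)+
  moreover have "j < k" using less_exp[of j] j(1) \<open>n \<le> k\<close> by linarith
  ultimately show thesis using j(1) \<open>n \<le> k\<close> N by (intro that) auto
qed

lemma reaches_of_lower_deviation:
  assumes r: "\<And>i. r i \<in> {0, 1}" and \<beta>: "0 < \<beta>" "\<beta> < 1" and "k \<le> length ys"
    and dev: "centered_sum r p ys k < - (C_const k \<beta> / 2) * sqrt (N1 r k)"
  obtains j where "j < length ys"
    "reaches (tilt_factor (level_lambda \<beta> j) r p) 1 1 (1 / level_budget \<beta> j) ys"
proof -
  have r_nonneg: "0 \<le> r i" for i using r[of i] by auto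
  then have "0 \<le> N1 r k" unfolding N1_def by (intro sum_nonneg)
  moreover have "N1 r k \<noteq> 0"
    using dev centered_sum_eq_0_if_N1_eq_0[of r k p ys] r_nonneg by force
  ultimately have "0 < N1 r k" by simp
  obtain j where j: "2 ^ j \<le> k" "j < k" "2 ^ j \<le> N1 r k" "N1 r k \<le> 2 * 2 ^ j"
  proof (rule N1_dyadic_block)
    show "r i \<in> {0, 1}" for i by (rule r)
  qed (use \<open>0 < N1 r k\<close> in auto)
  define L where "L = - ln (level_budget \<beta> j)"
  define lam where "lam = level_lambda \<beta> j"
  have "0 < L" using ln_level_budget_neg[OF \<beta>] by (simp add: L_def)
  have "0 < lam" using level_lambda_pos[OF \<beta>] by (simp add: lam_def)
  have "L / lam + lam * N1 r k / 8 \<le> C_const k \<beta> / 2 * sqrt (N1 r k)"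
    unfolding lam_def level_lambda_def L_def[symmetric]
    using \<open>0 < L\<close> j lil_constant_bound[OF j(1) \<beta>]
    by (intro tradeoff_at_lambda_le) (auto simp: L_def)
  then have "L / lam < - centered_sum r p ys k - lam * N1 r k / 8" using dev by simp
  then have "lam * (L / lam) < lam * (- centered_sum r p ys k - lam * N1 r k / 8)"
    using \<open>0 < lam\<close> by (rule mult_strict_left_mono)
  then have "L \<le> - lam * centered_sum r p ys k - lam\<^sup>2 * N1 r k / 8"
    using \<open>0 < lam\<close> by (simp add: algebra_simps power2_eq_square)
  have "1 / level_budget \<beta> j = exp L"
    using level_budget_pos[of \<beta> j] \<beta> by (simp add: L_def exp_minus inverse_eq_divide)
  also have "\<dots> \<le> exp (- lam * centered_sum r p ys k - lam\<^sup>2 * N1 r k / 8)"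
    using \<open>L \<le> _\<close> by simp
  also have "\<dots> = 1 * (\<Prod>i<k. tilt_factor lam r p (1 + i) (ys ! i))"
    by (simp add: prod_tilt_factor)
  finally have "1 / level_budget \<beta> j \<le> 1 * (\<Prod>i<k. tilt_factor lam r p (1 + i) (ys ! i))" .
  then show thesis
    using j(2) \<open>k \<le> length ys\<close> by (intro that reachesI) (simp_all add: lam_def)
qed

lemma sum_union_bound:
  fixes g :: "'a \<Rightarrow> real"
  assumes "finite A" "finite J" "\<And>x. x \<in> A \<Longrightarrow> 0 \<le> g x"
    and cover: "\<And>x. x \<in> A \<Longrightarrow> P x \<Longrightarrow> \<exists>j\<in>J. Q j x"
  shows "(\<Sum>x\<in>{x\<in>A. P x}. g x) \<le> (\<Sum>j\<in>J. \<Sum>x\<in>{x\<in>A. Q j x}. g x)"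
proof -
  define H where "H x = (\<Sum>j\<in>J. if Q j x then g x else 0)" for x
  have H: "0 \<le> H x" if "x \<in> A" for x
    unfolding H_def using assms(3) that by (intro sum_nonneg) auto
  have "g x \<le> H x" if x: "x \<in> A" "P x" for x
  proof -
    obtain j where "j \<in> J" "Q j x" using cover[OF x] by blast
    then have "g x = (if Q j x then g x else 0)" by simp
    also have "\<dots> \<le> H x"
      unfolding H_def using \<open>j \<in> J\<close> assms(2,3) \<open>x \<in> A\<close> by (intro member_le_sum) auto
    finally show ?thesis .
  qed
  then have "(\<Sum>x\<in>{x\<in>A. P x}. g x) \<le> (\<Sum>x\<in>{x\<in>A. P x}. H x)"
    by (intro sum_mono) auto
  also have "\<dots> \<le> (\<Sum>x\<in>A. H x)"
    using assms(1) H by (intro sum_mono2) auto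
  also have "\<dots> = (\<Sum>j\<in>J. \<Sum>x\<in>A. if Q j x then g x else 0)"
    unfolding H_def by (rule sum.swap)
  also have "\<dots> = (\<Sum>j\<in>J. \<Sum>x\<in>{x\<in>A. Q j x}. g x)"
    using assms(1) by (simp add: sum.inter_filter)
  finally show ?thesis .
qed

lemma prod_weight_lower_deviation_le:
  assumes r: "\<And>i. r i \<in> {0, 1}" and \<beta>: "0 < \<beta>" "\<beta> < 1"
    and w: "\<And>i v. 1 \<le> i \<Longrightarrow> 0 \<le> w i v" "\<And>i. 1 \<le> i \<Longrightarrow> w i True + w i False = 1"
      "\<And>i. 1 \<le> i \<Longrightarrow> r i = 1 \<Longrightarrow> w i True = p"
  shows "(\<Sum>ys | length ys = K \<and>
            (\<exists>k\<in>{1..K}. centered_sum r p ys k < - (C_const k \<beta> / 2) * sqrt (N1 r k)).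
            prod_weight w 1 ys) \<le> \<beta>"
proof -
  define Reach where "Reach j ys \<longleftrightarrow>
    reaches (tilt_factor (level_lambda \<beta> j) r p) 1 1 (1 / level_budget \<beta> j) ys" for j ys
  have "\<exists>j\<in>{..<K}. Reach j ys"
    if ys: "ys \<in> {ys. length ys = K}"
      "\<exists>k\<in>{1..K}. centered_sum r p ys k < - (C_const k \<beta> / 2) * sqrt (N1 r k)" for ys
  proof -
    obtain k where "k \<in> {1..K}" "centered_sum r p ys k < - (C_const k \<beta> / 2) * sqrt (N1 r k)"
      using ys(2) by blast
    then obtain j where "j < length ys" "Reach j ys"
      using reaches_of_lower_deviation[where r = r and ys = ys and k = k and p = p] r \<beta> ys(1)
      unfolding Reach_def by auto
    then show ?thesis using ys(1) by auto
  qed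
  then have "(\<Sum>ys | length ys = K \<and>
            (\<exists>k\<in>{1..K}. centered_sum r p ys k < - (C_const k \<beta> / 2) * sqrt (N1 r k)).
            prod_weight w 1 ys)
      \<le> (\<Sum>j<K. \<Sum>ys | length ys = K \<and> Reach j ys. prod_weight w 1 ys)"
    using sum_union_bound[of "{ys. length ys = K}" "{..<K}" "prod_weight w 1"]
      finite_lists_length_eq[of "UNIV :: bool set" K] prod_weight_nonneg[of 1 w] w(1)
    by simp
  also have "\<dots> \<le> (\<Sum>j<K. 1 / (1 / level_budget \<beta> j))"
  proof (intro sum_mono)
    fix j
    have lam: "0 \<le> level_lambda \<beta> j" using level_lambda_pos[OF \<beta>] by (rule less_imp_le)
    show "(\<Sum>ys | length ys = K \<and> Reach j ys. prod_weight w 1 ys) \<le> 1 / (1 / level_budget \<beta> j)"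
      unfolding Reach_def
    proof (rule ville_inequality)
      show "w i True * tilt_factor (level_lambda \<beta> j) r p i True
          + w i False * tilt_factor (level_lambda \<beta> j) r p i False \<le> 1" if "1 \<le> i" for i
        using r lam w that by (intro tilt_factor_mean_le_1) auto
    qed (use w level_budget_pos[OF \<beta>(1), of j] in \<open>auto simp: tilt_factor_def\<close>)
  qed
  also have "\<dots> \<le> \<beta>" using sum_level_budget_le[of \<beta> K] \<beta> by simp
  finally show ?thesis .
qed

section \<open>Reduction to Boolean patterns\<close>

lemma map_upt_eq_iff: "map f [0..<K] = ys \<longleftrightarrow> length ys = K \<and> (\<forall>i<K. f i = ys ! i)"
  by (auto simp: list_eq_iff_nth_eq)

lemma (in prob_space) bool_pattern_measurable:
  fixes Y :: "nat \<Rightarrow> 'a \<Rightarrow> bool"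
  assumes "indep_vars (\<lambda>_. count_space UNIV) Y {a..}"
  shows "(\<lambda>\<omega>. map (\<lambda>i. Y (a + i) \<omega>) [0..<K]) \<in> M \<rightarrow>\<^sub>M count_space UNIV"
proof (subst measurable_count_space_eq2_countable, intro conjI ballI)
  fix ys :: "bool list"
  have "Measurable.pred M (\<lambda>\<omega>. \<forall>i\<in>{..<K}. Y (a + i) \<omega> = ys ! i)"
    using assms by (intro pred_intros_finite(3) pred_count_space_const1) (auto simp: indep_vars_def)
  then have "{\<omega>\<in>space M. length ys = K \<and> (\<forall>i\<in>{..<K}. Y (a + i) \<omega> = ys ! i)} \<in> sets M"
    by (cases "length ys = K") (auto dest: predE)
  also have "{\<omega>\<in>space M. length ys = K \<and> (\<forall>i\<in>{..<K}. Y (a + i) \<omega> = ys ! i)}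
      = (\<lambda>\<omega>. map (\<lambda>i. Y (a + i) \<omega>) [0..<K]) -` {ys} \<inter> space M"
    by (auto simp: map_upt_eq_iff)
  finally show "(\<lambda>\<omega>. map (\<lambda>i. Y (a + i) \<omega>) [0..<K]) -` {ys} \<inter> space M \<in> sets M" .
qed auto

lemma bool_pattern_set_eq_INT:
  assumes "ys \<noteq> []"
  shows "{\<omega>\<in>S. map (\<lambda>i. Y (a + i) \<omega>) [0..<length ys] = ys}
           = (\<Inter>i\<in>{a..<a + length ys}. Y i -` {ys ! (i - a)} \<inter> S)"
proof (intro set_eqI iffI)
  fix \<omega> assume "\<omega> \<in> {\<omega>\<in>S. map (\<lambda>i. Y (a + i) \<omega>) [0..<length ys] = ys}"
  then have \<omega>: "\<omega> \<in> S" "\<And>i. i < length ys \<Longrightarrow> Y (a + i) \<omega> = ys ! i"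
    by (auto simp: map_upt_eq_iff)
  show "\<omega> \<in> (\<Inter>i\<in>{a..<a + length ys}. Y i -` {ys ! (i - a)} \<inter> S)"
  proof
    fix j assume "j \<in> {a..<a + length ys}"
    then have "j - a < length ys" "a + (j - a) = j" by auto
    then have "Y j \<omega> = ys ! (j - a)" using \<omega>(2) by metis
    then show "\<omega> \<in> Y j -` {ys ! (j - a)} \<inter> S" using \<omega>(1) by simp
  qed
next
  fix \<omega> assume \<omega>: "\<omega> \<in> (\<Inter>i\<in>{a..<a + length ys}. Y i -` {ys ! (i - a)} \<inter> S)"
  have "a \<in> {a..<a + length ys}" using assms by simp
  then have "\<omega> \<in> S" using \<omega> by blast
  moreover have "Y (a + i) \<omega> = ys ! i" if "i < length ys" for i
  proof -
    have "a + i \<in> {a..<a + length ys}" using that by simp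
    then have "\<omega> \<in> Y (a + i) -` {ys ! (a + i - a)} \<inter> S" using \<omega> by blast
    then show ?thesis by simp
  qed
  ultimately show "\<omega> \<in> {\<omega>\<in>S. map (\<lambda>i. Y (a + i) \<omega>) [0..<length ys] = ys}"
    by (simp add: map_upt_eq_iff)
qed

lemma (in prob_space) prob_bool_pattern:
  fixes Y :: "nat \<Rightarrow> 'a \<Rightarrow> bool"
  assumes indep: "indep_vars (\<lambda>_. count_space UNIV) Y {a..}"
  shows "prob {\<omega>\<in>space M. map (\<lambda>i. Y (a + i) \<omega>) [0..<length ys] = ys}
           = prod_weight (\<lambda>i v. prob {\<omega>\<in>space M. Y i \<omega> = v}) a ys"
proof (cases "ys = []")
  case True
  then show ?thesis by (simp add: prob_space)
next
  case False
  define A where "A i = Y i -` {ys ! (i - a)} \<inter> space M" for i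
  have "prob {\<omega>\<in>space M. map (\<lambda>i. Y (a + i) \<omega>) [0..<length ys] = ys}
      = prob (\<Inter>i\<in>{a..<a + length ys}. A i)"
    unfolding A_def bool_pattern_set_eq_INT[OF False] ..
  also have "\<dots> = (\<Prod>i\<in>{a..<a + length ys}. prob (A i))"
  proof (rule indep_setsD)
    show "indep_sets (\<lambda>i. {Y i -` A \<inter> space M |A. A \<in> sets (count_space UNIV)}) {a..}"
      using indep unfolding indep_vars_def2 by simp
    show "\<forall>i\<in>{a..<a + length ys}. A i \<in> {Y i -` A \<inter> space M |A. A \<in> sets (count_space UNIV)}"
      by (auto simp: A_def)
  qed (use False in auto)
  also have "\<dots> = (\<Prod>i<length ys. prob (A (a + i)))"
    using prod.shift_bounds_nat_ivl[of "\<lambda>i. prob (A i)" 0 a "length ys"]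
    by (simp add: lessThan_atLeast0 add.commute)
  also have "\<dots> = prod_weight (\<lambda>i v. prob {\<omega>\<in>space M. Y i \<omega> = v}) a ys"
  proof -
    have "A (a + i) = {\<omega>\<in>space M. Y (a + i) \<omega> = ys ! i}" for i by (auto simp: A_def)
    then show ?thesis by (simp add: prod_weight_eq_prod)
  qed
  finally show ?thesis .
qed

lemma (in prob_space) prob_bool_pattern_sum:
  fixes Y :: "nat \<Rightarrow> 'a \<Rightarrow> bool"
  assumes indep: "indep_vars (\<lambda>_. count_space UNIV) Y {a..}"
  shows "prob {\<omega>\<in>space M. Q (map (\<lambda>i. Y (a + i) \<omega>) [0..<K])}
           = (\<Sum>ys | length ys = K \<and> Q ys. prod_weight (\<lambda>i v. prob {\<omega>\<in>space M. Y i \<omega> = v}) a ys)"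
proof -
  define pat where "pat \<omega> = map (\<lambda>i. Y (a + i) \<omega>) [0..<K]" for \<omega>
  have "pat \<in> M \<rightarrow>\<^sub>M count_space UNIV"
    unfolding pat_def using indep by (rule bool_pattern_measurable)
  then have pred: "Measurable.pred M (\<lambda>\<omega>. P (pat \<omega>))" for P
    by (rule measurable_compose) simp
  have "prob {\<omega>\<in>space M. Q (pat \<omega>)} = (\<Sum>ys | length ys = K \<and> Q ys. prob {\<omega>\<in>space M. pat \<omega> = ys})"
  proof (rule prob_sum)
    show "finite {ys. length ys = K \<and> Q ys}"
      by (rule finite_subset[OF _ finite_lists_length_eq[of "UNIV :: bool set" K]]) auto
    have "length (pat \<omega>) = K" for \<omega> by (simp add: pat_def)
    then show "AE \<omega> in M. (\<forall>ys\<in>{ys. length ys = K \<and> Q ys}. pat \<omega> = ys \<longrightarrow> Q (pat \<omega>)) \<and>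
                    (Q (pat \<omega>) \<longrightarrow> (\<exists>!ys\<in>{ys. length ys = K \<and> Q ys}. pat \<omega> = ys))"
      by (intro AE_I2) blast
  qed (use pred[THEN predE] in auto)
  also have "\<dots> = (\<Sum>ys | length ys = K \<and> Q ys. prod_weight (\<lambda>i v. prob {\<omega>\<in>space M. Y i \<omega> = v}) a ys)"
    unfolding pat_def by (intro sum.cong refl) (simp add: prob_bool_pattern[OF indep, symmetric])
  finally show ?thesis unfolding pat_def .
qed


lemma (in prob_space) prob_abs_gt_normal:
  assumes "distributed M lborel X (normal_density \<nu> 1)"
  shows "prob {\<omega>\<in>space M. c < \<bar>X \<omega>\<bar>} = tail_prob \<nu> c"
proof -
  have X: "X \<in> M \<rightarrow>\<^sub>M borel" using distributed_measurable[OF assms] by simp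
  have "{x :: real. c < \<bar>x\<bar>} \<in> sets borel" by measurable
  then have "prob {\<omega>\<in>space M. c < \<bar>X \<omega>\<bar>} = measure (distr M lborel X) {x. c < \<bar>x\<bar>}"
    using X by (subst measure_distr) (auto simp: vimage_def Int_def conj_commute)
  also have "distr M lborel X = normal_measure \<nu>"
    using distributed_distr_eq_density[OF assms] by (simp add: normal_measure_def)
  finally show ?thesis by (simp add: tail_prob_def)
qed

lemma centered_sum_pattern:
  assumes "k \<le> K"
  shows "centered_sum r p (map (\<lambda>i. P (1 + i)) [0..<K]) k = (\<Sum>i\<in>{i\<in>{1..k}. P i}. r i) - p * N1 r k"
proof -
  have "centered_sum r p (map (\<lambda>i. P (1 + i)) [0..<K]) k
      = (\<Sum>i<k. r (Suc i) * (of_bool (P (Suc i)) - p))"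
    unfolding centered_sum_def using assms by (intro sum.cong) auto
  also have "\<dots> = (\<Sum>i<k. if P (Suc i) then r (Suc i) else 0) - p * (\<Sum>i<k. r (Suc i))"
  proof -
    have "r (Suc i) * (of_bool (P (Suc i)) - p)
        = (if P (Suc i) then r (Suc i) else 0) - p * r (Suc i)" for i
      by (cases "P (Suc i)") (simp_all add: algebra_simps)
    then show ?thesis by (simp add: sum_subtractf sum_distrib_left)
  qed
  also have "\<dots> = (\<Sum>i\<in>{1..k}. (if P i then r i else 0)) - p * N1 r k"
    by (simp add: sum.atLeast1_atMost_eq N1_eq_sum_lessThan)
  also have "(\<Sum>i\<in>{1..k}. (if P i then r i else 0)) = (\<Sum>i\<in>{i\<in>{1..k}. P i}. r i)"
    by (rule sum.inter_filter[symmetric]) simp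
  finally show ?thesis .
qed

lemma (in prob_space) prob_forall_ge_of_prefixes:
  fixes P :: "nat \<Rightarrow> 'a \<Rightarrow> bool"
  assumes "\<And>K. {\<omega>\<in>space M. \<exists>k\<le>K. \<not> P k \<omega>} \<in> events"
    and "\<And>K. prob {\<omega>\<in>space M. \<exists>k\<le>K. \<not> P k \<omega>} \<le> \<beta>"
  shows "1 - \<beta> \<le> prob {\<omega>\<in>space M. \<forall>k. P k \<omega>}"
proof -
  define E where "E K = {\<omega>\<in>space M. \<exists>k\<le>K. \<not> P k \<omega>}" for K
  have "range E \<subseteq> events" using assms(1) unfolding E_def by blast
  moreover have "incseq E"
    unfolding incseq_def E_def by (blast intro: order_trans)
  ultimately have "(\<lambda>K. prob (E K)) \<longlonglongrightarrow> prob (\<Union>K. E K)"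
    by (rule finite_Lim_measure_incseq)
  then have "prob (\<Union>K. E K) \<le> \<beta>"
    using assms(2) unfolding E_def by (intro LIMSEQ_le_const2) auto
  moreover have "{\<omega>\<in>space M. \<forall>k. P k \<omega>} = space M - (\<Union>K. E K)"
    by (auto simp: E_def)
  moreover have "(\<Union>K. E K) \<in> events" using assms(1) unfolding E_def by blast
  ultimately show ?thesis by (simp add: prob_compl)
qed

lemma (in prob_space) prob_lower_deviation_le:
  fixes Y :: "nat \<Rightarrow> 'a \<Rightarrow> bool"
  assumes indep: "indep_vars (\<lambda>_. count_space UNIV) Y {1..}"
    and r: "\<And>i. r i \<in> {0, 1}" and \<beta>: "0 < \<beta>" "\<beta> < 1"
    and p: "\<And>i. 1 \<le> i \<Longrightarrow> r i = 1 \<Longrightarrow> prob {\<omega>\<in>space M. Y i \<omega>} = p"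
  shows "prob {\<omega>\<in>space M. \<exists>k\<in>{1..K}. centered_sum r p (map (\<lambda>i. Y (1 + i) \<omega>) [0..<K]) k
                                      < - (C_const k \<beta> / 2) * sqrt (N1 r k)} \<le> \<beta>"
proof -
  define w where "w i v = prob {\<omega>\<in>space M. Y i \<omega> = v}" for i v
  have "w i True + w i False = 1" if "1 \<le> i" for i
  proof -
    have "Measurable.pred M (Y i)" using indep that by (auto simp: indep_vars_def)
    then show ?thesis using prob_neg[of "Y i"] by (simp add: w_def pred_def)
  qed
  moreover have "w i True = p" if "1 \<le> i" "r i = 1" for i
    using p[OF that] by (simp add: w_def)
  ultimately have "(\<Sum>ys | length ys = K \<and> (\<exists>k\<in>{1..K}.
      centered_sum r p ys k < - (C_const k \<beta> / 2) * sqrt (N1 r k)). prod_weight w 1 ys) \<le> \<beta>"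
    using r \<beta> by (intro prod_weight_lower_deviation_le) (auto simp: w_def)
  then show ?thesis unfolding w_def prob_bool_pattern_sum[OF indep, symmetric] .
qed

theorem lemma6:
  fixes M :: "'a measure" and Z :: "nat \<Rightarrow> 'a \<Rightarrow> real"
    and r :: "nat \<Rightarrow> real" and \<mu> c \<beta> :: real
  assumes "prob_space M"
    and "prob_space.indep_vars M (\<lambda>_. borel) Z {1..}"
    and "\<And>i. i \<ge> 1 \<Longrightarrow> distributed M lborel (Z i) (normal_density (\<mu> * r i) 1)"
    and "\<mu> > 0"
    and "\<And>i. r i \<in> {0, 1}"
    and "0 < \<beta>" and "\<beta> < 1"
  shows "measure M {\<omega> \<in> space M. \<forall>k\<ge>1.
            (\<Sum>i\<in>{i\<in>{1..k}. \<bar>Z i \<omega>\<bar> > c}. r i) - tail_prob \<mu> c * N1 r k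
              \<ge> - (C_const k \<beta> / 2) * sqrt (N1 r k)} \<ge> 1 - \<beta>"
proof -
  interpret prob_space M by fact
  define Y where "Y i \<omega> \<longleftrightarrow> c < \<bar>Z i \<omega>\<bar>" for i \<omega>
  define pat where "pat K \<omega> = map (\<lambda>i. Y (1 + i) \<omega>) [0..<K]" for K \<omega>
  define Bad where "Bad K ys \<longleftrightarrow>
    (\<exists>k\<in>{1..K}. centered_sum r (tail_prob \<mu> c) ys k < - (C_const k \<beta> / 2) * sqrt (N1 r k))" for K ys
  have indep: "indep_vars (\<lambda>_. count_space UNIV) Y {1..}"
    unfolding Y_def using assms(2) by (rule indep_vars_compose2) measurable
  have "centered_sum r (tail_prob \<mu> c) (pat K \<omega>) k
      = (\<Sum>i\<in>{i\<in>{1..k}. \<bar>Z i \<omega>\<bar> > c}. r i) - tail_prob \<mu> c * N1 r k" if "k \<le> K" for K k \<omega>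
    unfolding pat_def Y_def using that by (rule centered_sum_pattern)
  then have failure: "{\<omega>\<in>space M. \<exists>k\<le>K. \<not> (1 \<le> k \<longrightarrow> - (C_const k \<beta> / 2) * sqrt (N1 r k) \<le>
      (\<Sum>i\<in>{i\<in>{1..k}. \<bar>Z i \<omega>\<bar> > c}. r i) - tail_prob \<mu> c * N1 r k)}
      = {\<omega>\<in>space M. Bad K (pat K \<omega>)}" for K
    unfolding Bad_def by (auto simp: not_le)
  have "{\<omega>\<in>space M. Bad K (pat K \<omega>)} \<in> events" for K
    unfolding pat_def
    by (rule predE, rule measurable_compose[OF bool_pattern_measurable[OF indep]]) simp
  moreover have "prob {\<omega>\<in>space M. Bad K (pat K \<omega>)} \<le> \<beta>" for K
    unfolding Bad_def pat_def using indep assms(5-7)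
  proof (rule prob_lower_deviation_le)
    show "prob {\<omega>\<in>space M. Y i \<omega>} = tail_prob \<mu> c" if "1 \<le> i" "r i = 1" for i
      using prob_abs_gt_normal[OF assms(3)[OF that(1)]] that(2) by (simp add: Y_def)
  qed
  ultimately show ?thesis
    unfolding failure[symmetric] by (rule prob_forall_ge_of_prefixes)
qed

end
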